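(* Let $u=s_{i_1}\cdots s_{i_l}$ and $v=s_{j_1}\cdots s_{j_m}$ be reduced words for glides in $\hat S_n$ such that $s_{j_1}\cdots s_{j_m}s_{i_1}\cdots s_{i_l}$ is reduced. In the wiring diagram of $v|u$, write $i\triangleleft j$ if wires $i$ and $j$ cross with $j$ the upper wire of the crossing. Then there exist real numbers $\alpha_1,\dots,\alpha_n$ such that $\alpha_i<\alpha_j$ whenever $i\triangleleft j$.
   Context: $\hat S_n$ is the affine symmetric group with generators $s_0,\dots,s_{n-1}$ (indices mod $n$) and relations $s_i^2=1$, $s_is_js_i=s_js_is_j$ if $i-j\equiv\pm1$, $s_is_j=s_js_i$ if $i-j\not\equiv0,\pm1\pmod n$; $\phi:\hat S_n\to S_n$ sends $s_i\mapsto(i\ i+1)$ ($1\le i\le n-1$), $s_0\mapsto(1\ n)$; a glide of offset $k\in\{0,\dots,n-1\}$ is an element $g$ with $\phi(g)(j)\equiv j+k\pmod n$ for all $j$. A word is drawn as a wiring diagram left to right on a cylinder with $n$ wires in positions $1,\dots,n$ (mod $n$); a letter $s_i$ is a crossing of the wires in positions $i$ and $i+1$ ($s_0$: positions $n$ and $1$). The upper wire of a crossing $s_i$ is the one passing from position $i+1$ to position $i$ (for $s_0$: from position $1$ to position $n$). In the diagram of $v|u$ (the word $vu$ with a cut between $v$ and $u$), wire number $i$ is the wire occupying position $i$ at the cut. *)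

theory Defs
  imports Complex_Main
begin

(* Letters of words are natural numbers p < n, standing for s_p. *)

definition adj :: "nat \<Rightarrow> nat \<Rightarrow> nat \<Rightarrow> bool" where
  "adj n i j \<longleftrightarrow> (i + 1) mod n = j mod n \<or> (j + 1) mod n = i mod n"

inductive word_equiv :: "nat \<Rightarrow> nat list \<Rightarrow> nat list \<Rightarrow> bool" for n where
  refl: "word_equiv n w w"
| sym: "word_equiv n a b \<Longrightarrow> word_equiv n b a"
| trans: "word_equiv n a b \<Longrightarrow> word_equiv n b c \<Longrightarrow> word_equiv n a c"
| cong: "word_equiv n a b \<Longrightarrow> word_equiv n (x @ a @ y) (x @ b @ y)"
| square: "i < n \<Longrightarrow> word_equiv n [i, i] []"
| braid: "i < n \<Longrightarrow> j < n \<Longrightarrow> adj n i j \<Longrightarrow> word_equiv n [i, j, i] [j, i, j]"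
| comm: "i < n \<Longrightarrow> j < n \<Longrightarrow> i \<noteq> j \<Longrightarrow> \<not> adj n i j \<Longrightarrow> word_equiv n [i, j] [j, i]"

definition reduced :: "nat \<Rightarrow> nat list \<Rightarrow> bool" where
  "reduced n w \<longleftrightarrow> set w \<subseteq> {..<n} \<and>
     (\<forall>w'. set w' \<subseteq> {..<n} \<and> word_equiv n w w' \<longrightarrow> length w \<le> length w')"

definition lowpos :: "nat \<Rightarrow> nat \<Rightarrow> nat" where
  "lowpos n p = (if p = 0 then n else p)"
definition highpos :: "nat \<Rightarrow> nat \<Rightarrow> nat" where
  "highpos n p = (if p = 0 then 1 else p + 1)"

(* phi(s_p) as a permutation of {1..n}: (p p+1) for p \<ge> 1, (1 n) for p = 0 *)
definition tr :: "nat \<Rightarrow> nat \<Rightarrow> nat \<Rightarrow> nat" where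
  "tr n p x = (if x = lowpos n p then highpos n p
               else if x = highpos n p then lowpos n p else x)"

definition phi_word :: "nat \<Rightarrow> nat list \<Rightarrow> nat \<Rightarrow> nat" where
  "phi_word n w = foldr (\<lambda>p f. tr n p \<circ> f) w id"

definition is_glide :: "nat \<Rightarrow> nat list \<Rightarrow> bool" where
  "is_glide n w \<longleftrightarrow> (\<exists>k < n. \<forall>j \<in> {1..n}. phi_word n w j mod n = (j + k) mod n)"

(* Wiring diagram of v|u: state t maps a position to the wire (numbered by its
   position at the cut) occupying it just left of the t-th letter of v @ u. *)
definition wstate :: "nat \<Rightarrow> nat list \<Rightarrow> nat list \<Rightarrow> nat \<Rightarrow> nat \<Rightarrow> nat" where
  "wstate n v u t = phi_word n (rev v) \<circ> phi_word n (take t (v @ u))"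

definition wire_below :: "nat \<Rightarrow> nat list \<Rightarrow> nat list \<Rightarrow> nat \<Rightarrow> nat \<Rightarrow> bool" where
  "wire_below n v u i j \<longleftrightarrow>
     (\<exists>t < length (v @ u).
        wstate n v u t (lowpos n ((v @ u) ! t)) = i \<and>
        wstate n v u t (highpos n ((v @ u) ! t)) = j)"

end

theory Submission
  imports Defs
begin

text \<open>
  Lift the action of \<open>\<hat>S\<^sub>n\<close> to \<open>\<int>\<close>: the letter \<open>s\<^sub>p\<close> swaps \<open>kn + p\<close> and \<open>kn + p + 1\<close> for every \<open>k\<close>,
  so a word acts by an \<open>n\<close>-periodic permutation of \<open>\<int>\<close> that respects the defining relations.
  Wires of a diagram then become strands in the universal cover of the cylinder, and the
  permutation of a prefix sends the current position of a strand back to its starting one.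
  In a reduced word every letter is an ascent: the strand entering the crossing from below
  started below the other one, for otherwise an exchange argument shortens the word by
  commutation and braid moves. Hence two strands that have crossed stay in reversed order,
  and the displacement (starting position minus final position) of the upper wire of a
  crossing exceeds that of the lower wire. The displacement is \<open>n\<close>-periodic, so it is a
  function \<open>\<alpha>\<close> of the wire number.
\<close>

section \<open>The affine action on the integers\<close>

lemma mod_add_ne_self:
  fixes x d :: int
  assumes "\<bar>d\<bar> < N" "d \<noteq> 0"
  shows "(x + d) mod N \<noteq> x mod N"
proof
  assume "(x + d) mod N = x mod N"
  then have "N dvd d"
    by (metis add_diff_cancel_left' mod_eq_dvd_iff)
  then show False
    using assms dvd_imp_le_int[of d N] by auto
qed

definition aswap :: "nat \<Rightarrow> nat \<Rightarrow> int \<Rightarrow> int" where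
  "aswap n p x = (if x mod int n = int p then x + 1
                  else if (x - 1) mod int n = int p then x - 1 else x)"

definition aperm :: "nat \<Rightarrow> nat list \<Rightarrow> int \<Rightarrow> int" where
  "aperm n w = foldr (\<lambda>p f. aswap n p \<circ> f) w id"

lemma aperm_Nil [simp]: "aperm n [] = id"
  by (simp add: aperm_def)

lemma aperm_Cons [simp]: "aperm n (p # w) = aswap n p \<circ> aperm n w"
  by (simp add: aperm_def)

lemma aperm_append [simp]: "aperm n (a @ b) = aperm n a \<circ> aperm n b"
  by (induction a) auto

lemma aswap_aswap [simp]:
  assumes "2 \<le> n"
  shows "aswap n p (aswap n p x) = x"
  using assms mod_add_ne_self[of 1 "int n" x] by (auto simp: aswap_def)

lemma aswap_add_period [simp]: "aswap n p (x + int n * k) = aswap n p x + int n * k"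
proof -
  have "(x + int n * k - 1) mod int n = (x - 1) mod int n"
    by (metis add.commute add_diff_eq mod_mult_self2)
  then show ?thesis
    by (simp add: aswap_def)
qed

lemma aperm_add_period [simp]: "aperm n w (x + int n * k) = aperm n w x + int n * k"
  by (induction w arbitrary: x) auto

lemma aperm_periodic_diff:
  assumes "x mod int n = y mod int n"
  shows "aperm n w x - x = aperm n w y - y"
proof -
  obtain k where "x = y + int n * k"
    using assms by (metis mod_eq_dvd_iff dvdE eq_diff_eq add.commute)
  then show ?thesis
    by simp
qed

lemma aperm_rev_aperm [simp]: "2 \<le> n \<Longrightarrow> aperm n (rev w) (aperm n w x) = x"
  by (induction w arbitrary: x) auto

lemma aperm_aperm_rev [simp]: "2 \<le> n \<Longrightarrow> aperm n w (aperm n (rev w) x) = x"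
  using aperm_rev_aperm[of n "rev w"] by simp

lemma aperm_inj: "2 \<le> n \<Longrightarrow> aperm n w x = aperm n w y \<longleftrightarrow> x = y"
  by (metis aperm_rev_aperm)

lemma aswap_at:
  assumes "3 \<le> n" "c mod int n = int p"
  shows "aswap n p c = c + 1" and "aswap n p (c + 1) = c"
    and "aswap n p (c + 2) = c + 2" and "aswap n p (c - 1) = c - 1"
  using assms mod_add_ne_self[of 1 "int n" c] mod_add_ne_self[of 2 "int n" c]
    mod_add_ne_self[of "-1" "int n" c] mod_add_ne_self[of "-2" "int n" c]
  by (auto simp: aswap_def algebra_simps)

lemma aswap_fixed:
  assumes "2 \<le> n" "(x - int p) mod int n \<notin> {0, 1}"
  shows "aswap n p x = x"
proof -
  have "(x - int p) mod int n = (x mod int n - int p) mod int n"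
    by (simp add: mod_diff_left_eq)
  moreover have "(x - int p) mod int n = ((x - 1) mod int n + (1 - int p)) mod int n"
    by (simp add: mod_add_left_eq)
  ultimately have "x mod int n \<noteq> int p" "(x - 1) mod int n \<noteq> int p"
    using assms by auto
  then show ?thesis
    by (simp add: aswap_def)
qed

lemma aswap_braid_succ:
  assumes n: "3 \<le> n" and "i < n" "j < n" and ij: "(int i + 1) mod int n = int j"
  shows "aswap n i (aswap n j (aswap n i x)) = aswap n j (aswap n i (aswap n j x))"
proof -
  define r where "r = (x - int i) mod int n"
  define c where "c = int i + int n * ((x - int i) div int n)"
  have x: "x = c + r"
    by (simp add: c_def r_def)
  have r: "0 \<le> r" "r < int n"
    using n by (auto simp: r_def)
  have ci: "c mod int n = int i"
    using \<open>i < n\<close> by (simp add: c_def)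
  have cj: "(c + 1) mod int n = int j"
    using ci ij by (metis mod_add_left_eq)
  note I = aswap_at[OF n ci] and J = aswap_at[OF n cj]
  have J': "aswap n j c = c" "aswap n j (c + 1) = c + 2" "aswap n j (c + 2) = c + 1"
    using J(1,2,4) by (simp_all add: algebra_simps)
  consider "r = 0" | "r = 1" | "r = 2" | "3 \<le> r"
    using r by linarith
  then show ?thesis
  proof cases
    case 1
    then show ?thesis
      by (simp add: x I J')
  next
    case 2
    then show ?thesis
      by (simp add: x I J')
  next
    case 3
    then have "x = c + 2"
      using x by simp
    then show ?thesis
      by (simp only: I(2,3) J'(1,3))
  next
    case 4
    have "(x - int j) mod int n = ((c + 1) mod int n + (r - 1 - int j)) mod int n"
      using mod_add_left_eq[of "c + 1" "int n" "r - 1 - int j"] by (simp add: x algebra_simps)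
    also have "\<dots> = r - 1"
      using cj 4 r by simp
    finally have "aswap n j x = x"
      using 4 n by (intro aswap_fixed) auto
    moreover have "aswap n i x = x"
      using 4 n by (intro aswap_fixed) (auto simp: r_def[symmetric])
    ultimately show ?thesis
      by simp
  qed
qed

lemma adj_iff_int_mod:
  "adj n i j \<longleftrightarrow> (int i + 1) mod int n = int j mod int n \<or> (int j + 1) mod int n = int i mod int n"
proof -
  have "(a + 1) mod n = b mod n \<longleftrightarrow> (int a + 1) mod int n = int b mod int n" for a b
    by (metis of_nat_eq_iff of_nat_Suc of_nat_mod Suc_eq_plus1 add.commute)
  then show ?thesis
    by (simp add: adj_def)
qed

definition moves :: "nat \<Rightarrow> nat \<Rightarrow> int \<Rightarrow> bool" where
  "moves n p x \<longleftrightarrow> x mod int n = int p \<or> (x - 1) mod int n = int p"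

lemma aswap_if_not_moves: "\<not> moves n p x \<Longrightarrow> aswap n p x = x"
  by (simp add: aswap_def moves_def)

lemma moves_aswap: "moves n p x \<Longrightarrow> moves n p (aswap n p x)"
  by (auto simp: moves_def aswap_def)

lemma moves_imp_adj:
  assumes "moves n i x" "moves n j x" "i \<noteq> j"
  shows "adj n i j"
proof -
  have "((x - 1) mod int n + 1) mod int n = x mod int n"
    by (simp add: mod_add_left_eq)
  moreover have "int p mod int n = int p" if "y mod int n = int p" for y p
    using that by (metis mod_mod_trivial)
  ultimately show ?thesis
    using assms by (auto simp: moves_def adj_iff_int_mod)
qed

lemma aswap_commute:
  assumes "i \<noteq> j" "\<not> adj n i j"
  shows "aswap n i (aswap n j x) = aswap n j (aswap n i x)"
proof -
  have no_both: "\<not> (moves n i y \<and> moves n j y)" for y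
    using assms moves_imp_adj by blast
  show ?thesis
  proof (cases "moves n i x")
    case True
    then show ?thesis
      using no_both[of x] no_both[of "aswap n i x"] moves_aswap[OF True]
      by (simp add: aswap_if_not_moves)
  next
    case False
    show ?thesis
    proof (cases "moves n j x")
      case True
      then show ?thesis
        using False no_both[of "aswap n j x"] moves_aswap[OF True]
        by (simp add: aswap_if_not_moves)
    qed (simp add: False aswap_if_not_moves)
  qed
qed

lemma aswap_braid:
  assumes "3 \<le> n" "i < n" "j < n" "adj n i j"
  shows "aswap n i (aswap n j (aswap n i x)) = aswap n j (aswap n i (aswap n j x))"
  using assms aswap_braid_succ[of n i j] aswap_braid_succ[of n j i]
  by (auto simp: adj_iff_int_mod)

lemma aperm_word_equiv: "word_equiv n a b \<Longrightarrow> 3 \<le> n \<Longrightarrow> aperm n a = aperm n b"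
proof (induction rule: word_equiv.induct)
  case (braid i j)
  then show ?case
    using aswap_braid[of n i j] by (auto simp: fun_eq_iff)
next
  case (comm i j)
  then show ?case
    using aswap_commute[of i j n] by (auto simp: fun_eq_iff)
qed (auto simp: fun_eq_iff)

section \<open>Ascending words and the exchange property\<close>

text \<open>\<open>ascent n w p\<close> says that \<open>w s\<^sub>p\<close> is longer than \<open>w\<close>: it crosses two strands in their original order.\<close>

definition ascent :: "nat \<Rightarrow> nat list \<Rightarrow> nat \<Rightarrow> bool" where
  "ascent n w p \<longleftrightarrow> aperm n w (int p) < aperm n w (int p + 1)"

definition ascending :: "nat \<Rightarrow> nat list \<Rightarrow> bool" where
  "ascending n w \<longleftrightarrow> (\<forall>t < length w. ascent n (take t w) (w ! t))"

lemma ascending_Nil [simp]: "ascending n []"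
  by (simp add: ascending_def)

lemma ascending_snoc [simp]: "ascending n (w @ [p]) \<longleftrightarrow> ascending n w \<and> ascent n w p"
  by (auto simp: ascending_def nth_append less_Suc_eq)

lemma ascent_iff_mod:
  assumes "c mod int n = int p"
  shows "ascent n w p \<longleftrightarrow> aperm n w c < aperm n w (c + 1)"
proof -
  have "c = int p + int n * (c div int n)" and "c + 1 = (int p + 1) + int n * (c div int n)"
    using assms mod_div_mult_eq[of c "int n"] by (simp_all add: algebra_simps)
  then show ?thesis
    by (metis ascent_def aperm_add_period add_less_cancel_right)
qed

lemma ascent_snoc_commuting:
  assumes "s < n" "s \<noteq> t" "\<not> adj n s t"
  shows "ascent n (w @ [t]) s \<longleftrightarrow> ascent n w s"
proof -
  have "moves n s (int s)" "moves n s (int s + 1)"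
    using assms(1) by (auto simp: moves_def)
  then have "aswap n t (int s) = int s" "aswap n t (int s + 1) = int s + 1"
    using assms moves_imp_adj by (metis aswap_if_not_moves)+
  then show ?thesis
    by (simp add: ascent_def)
qed

lemma aperm_eq_snoc:
  assumes "3 \<le> n" "word_equiv n x (y @ [s])"
  shows "aperm n y z = aperm n x (aswap n s z)"
  using aperm_word_equiv[OF assms(2,1)] assms(1) by simp

lemma ascent_cong: "aperm n x = aperm n y \<Longrightarrow> ascent n x p \<longleftrightarrow> ascent n y p"
  by (simp add: ascent_def)

definition splits_off :: "nat \<Rightarrow> nat list \<Rightarrow> nat \<Rightarrow> bool" where
  "splits_off n x s \<longleftrightarrow>
     (\<exists>y. set y \<subseteq> {..<n} \<and> ascending n y \<and> length y + 1 = length x \<and> word_equiv n x (y @ [s]))"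

lemma word_equiv_append_left: "word_equiv n a b \<Longrightarrow> word_equiv n (c @ a) (c @ b)"
  using word_equiv.cong[of n a b c "[]"] by simp

lemma word_equiv_append_right: "word_equiv n a b \<Longrightarrow> word_equiv n (a @ c) (b @ c)"
  using word_equiv.cong[of n a b "[]" c] by simp

lemma splits_off_snoc_commuting:
  assumes n: "3 \<le> n" and st: "s < n" "t < n" "s \<noteq> t" "\<not> adj n s t"
    and asc: "ascent n x t" and split: "splits_off n x s"
  shows "splits_off n (x @ [t]) s"
proof -
  obtain y where y: "set y \<subseteq> {..<n}" "ascending n y" "length y + 1 = length x"
    "word_equiv n x (y @ [s])"
    using split by (auto simp: splits_off_def)
  have "\<not> adj n t s"
    using st(4) by (auto simp: adj_def)
  then have "ascent n y t \<longleftrightarrow> ascent n (y @ [s]) t"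
    using st by (simp add: ascent_snoc_commuting)
  also have "\<dots> \<longleftrightarrow> ascent n x t"
    using aperm_word_equiv[OF y(4) n] by (simp add: ascent_cong)
  finally have "ascending n (y @ [t])"
    using y(2) asc by simp
  moreover have "word_equiv n (x @ [t]) ((y @ [t]) @ [s])"
  proof -
    have "word_equiv n (x @ [t]) (y @ [s, t])"
      using word_equiv_append_right[OF y(4), of "[t]"] by simp
    moreover have "word_equiv n (y @ [s, t]) (y @ [t, s])"
      using word_equiv_append_left[OF word_equiv.comm[OF st]] by simp
    ultimately show ?thesis
      using word_equiv.trans by fastforce
  qed
  ultimately show ?thesis
    using y st(2) by (auto simp: splits_off_def intro!: exI[of _ "y @ [t]"])
qed

lemma aswap_adjacent_values:
  assumes "3 \<le> n" "lo < n" "(int lo + 1) mod int n = int hi"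
  shows "aswap n lo (int lo) = int lo + 1" "aswap n lo (int lo + 1) = int lo"
    "aswap n lo (int lo + 2) = int lo + 2" "aswap n hi (int lo) = int lo"
    "aswap n hi (int lo + 1) = int lo + 2" "aswap n hi (int lo + 2) = int lo + 1"
  using aswap_at[of n "int lo" lo] aswap_at[of n "int lo + 1" hi] assms
  by (simp_all add: algebra_simps)

lemma word_equiv_snoc_braid:
  assumes "word_equiv n x (x2 @ [s])" "word_equiv n x2 (x3 @ [t])" "s < n" "t < n" "adj n s t"
  shows "word_equiv n (x @ [t]) (x3 @ [s, t, s])"
proof -
  have "word_equiv n (x @ [t]) (x2 @ [s, t])"
    using word_equiv_append_right[OF assms(1), of "[t]"] by simp
  moreover have "word_equiv n (x2 @ [s, t]) (x3 @ [t, s, t])"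
    using word_equiv_append_right[OF assms(2), of "[s, t]"] by simp
  moreover have "word_equiv n (x3 @ [t, s, t]) (x3 @ [s, t, s])"
    using word_equiv_append_left[OF word_equiv.braid[of t n s]] assms(3-5) by (auto simp: adj_def)
  ultimately show ?thesis
    using word_equiv.trans by fastforce
qed

lemma splits_off_snoc_braid:
  assumes n: "3 \<le> n" and st: "s < n" "t < n" "adj n s t"
    and IH: "\<And>y r. length y \<le> length x \<Longrightarrow> ascending n y \<Longrightarrow> set y \<subseteq> {..<n} \<Longrightarrow> r < n \<Longrightarrow>
               \<not> ascent n y r \<Longrightarrow> splits_off n y r"
    and x: "ascending n x" "set x \<subseteq> {..<n}" "ascent n x t" "\<not> ascent n (x @ [t]) s"
  shows "splits_off n (x @ [t]) s"
proof -
  obtain lo hi where lo: "lo < n" and hi: "(int lo + 1) mod int n = int hi"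
    and orient: "s = lo \<and> t = hi \<or> s = hi \<and> t = lo"
    using st by (auto simp: adj_iff_int_mod)
  define c where "c = int lo"
  have lo_ascent: "ascent n w lo \<longleftrightarrow> aperm n w c < aperm n w (c + 1)" for w
    using lo by (intro ascent_iff_mod) (simp add: c_def)
  have hi_ascent: "ascent n w hi \<longleftrightarrow> aperm n w (c + 1) < aperm n w (c + 2)" for w
    using ascent_iff_mod[of "c + 1" n hi w] hi by (simp add: c_def add.assoc)
  note V = aswap_adjacent_values[OF n lo hi, folded c_def]
  define f where "f = aperm n x"
  \<comment> \<open>every ascent below is a comparison among \<open>f c\<close>, \<open>f (c + 1)\<close> and \<open>f (c + 2)\<close>\<close>
  have inj: "f c \<noteq> f (c + 1)" "f (c + 1) \<noteq> f (c + 2)" "f c \<noteq> f (c + 2)"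
    using n by (simp_all add: f_def aperm_inj)
  have "\<not> ascent n x s"
    using orient x(3,4) inj by (auto simp: lo_ascent hi_ascent V f_def)
  then obtain x2 where x2: "set x2 \<subseteq> {..<n}" "ascending n x2" "length x2 + 1 = length x"
      "word_equiv n x (x2 @ [s])"
    using IH[of x s] x st by (auto simp: splits_off_def)
  have f2: "aperm n x2 z = f (aswap n s z)" for z
    using aperm_eq_snoc[OF n x2(4)] by (simp add: f_def)
  have "\<not> ascent n x2 t"
    using orient x(3,4) inj by (auto simp: lo_ascent hi_ascent V f2 f_def)
  then obtain x3 where x3: "set x3 \<subseteq> {..<n}" "ascending n x3" "length x3 + 1 = length x2"
      "word_equiv n x2 (x3 @ [t])"
    using IH[of x2 t] x2 x st by (auto simp: splits_off_def)
  have f3: "aperm n x3 z = f (aswap n s (aswap n t z))" for z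
    using aperm_eq_snoc[OF n x3(4)] by (simp add: f2)
  have "ascent n x3 s" "ascent n (x3 @ [s]) t"
    using orient x(3,4) inj by (auto simp: lo_ascent hi_ascent V f3 f_def)
  then have "ascending n (x3 @ [s, t])"
    using ascending_snoc[of n "x3 @ [s]" t] x3(2) by simp
  moreover have "word_equiv n (x @ [t]) ((x3 @ [s, t]) @ [s])"
    using word_equiv_snoc_braid[OF x2(4) x3(4) st] by simp
  ultimately show ?thesis
    using x2(3) x3 st by (auto simp: splits_off_def intro!: exI[of _ "x3 @ [s, t]"])
qed

lemma not_ascent_imp_splits_off:
  assumes n: "3 \<le> n"
  shows "ascending n x \<Longrightarrow> set x \<subseteq> {..<n} \<Longrightarrow> s < n \<Longrightarrow> \<not> ascent n x s \<Longrightarrow> splits_off n x s"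
proof (induction "length x" arbitrary: x s rule: less_induct)
  case less
  show ?case
  proof (cases x rule: rev_exhaust)
    case Nil
    then show ?thesis
      using less.prems by (simp add: ascent_def)
  next
    case (snoc x' t)
    have x': "ascending n x'" "set x' \<subseteq> {..<n}" "ascent n x' t" "\<not> ascent n (x' @ [t]) s"
      and t: "t < n"
      using less.prems snoc by auto
    have IH: "\<And>y r. length y \<le> length x' \<Longrightarrow> ascending n y \<Longrightarrow> set y \<subseteq> {..<n} \<Longrightarrow> r < n \<Longrightarrow>
                \<not> ascent n y r \<Longrightarrow> splits_off n y r"
      using less.hyps snoc by fastforce
    consider "t = s" | "t \<noteq> s" "\<not> adj n s t" | "adj n s t"
      by blast
    then show ?thesis
    proof cases
      case 1
      then show ?thesis
        using x' snoc by (auto simp: splits_off_def intro: word_equiv.refl)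
    next
      case 2
      then have "splits_off n x' s"
        using IH x' less.prems(3) by (simp add: ascent_snoc_commuting)
      then show ?thesis
        using splits_off_snoc_commuting[OF n less.prems(3) t _ _ x'(3)] 2 snoc by auto
    next
      case 3
      then show ?thesis
        using splits_off_snoc_braid[OF n less.prems(3) t 3 IH x'] snoc by simp
    qed
  qed
qed

lemma reduced_append_left:
  assumes "reduced n (x @ y)"
  shows "reduced n x"
  unfolding reduced_def
proof (intro conjI allI impI)
  show "set x \<subseteq> {..<n}"
    using assms by (simp add: reduced_def)
next
  fix x' assume "set x' \<subseteq> {..<n} \<and> word_equiv n x x'"
  then have "length (x @ y) \<le> length (x' @ y)"
    using assms word_equiv_append_right unfolding reduced_def by (metis set_append Un_subset_iff)
  then show "length x \<le> length x'"
    by simp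
qed

lemma reduced_imp_ascending: "3 \<le> n \<Longrightarrow> reduced n w \<Longrightarrow> ascending n w"
proof (induction w rule: rev_induct)
  case (snoc p w)
  have w: "set w \<subseteq> {..<n}" and p: "p < n"
    using snoc.prems(2) by (auto simp: reduced_def)
  have "ascending n w"
    using snoc reduced_append_left by blast
  moreover have "ascent n w p"
  proof (rule ccontr)
    assume "\<not> ascent n w p"
    then obtain y where y: "set y \<subseteq> {..<n}" "length y + 1 = length w" "word_equiv n w (y @ [p])"
      using not_ascent_imp_splits_off[OF snoc.prems(1) \<open>ascending n w\<close> w p] by (auto simp: splits_off_def)
    have "word_equiv n (w @ [p]) (y @ [p, p])"
      using word_equiv_append_right[OF y(3), of "[p]"] by simp
    moreover have "word_equiv n (y @ [p, p]) y"
      using word_equiv.cong[OF word_equiv.square[OF p], of y "[]"] by simp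
    ultimately have "length (w @ [p]) \<le> length y"
      using snoc.prems(2) y(1) word_equiv.trans unfolding reduced_def by blast
    then show False
      using y(2) by simp
  qed
  ultimately show ?case
    by simp
qed simp

lemma aswap_less_aswap:
  assumes n: "3 \<le> n" and "x < y" and not_swapped: "\<not> (y = x + 1 \<and> x mod int n = int p)"
  shows "aswap n p x < aswap n p y"
proof -
  have bounds: "z - 1 \<le> aswap n p z" "aswap n p z \<le> z + 1" for z
    by (auto simp: aswap_def)
  consider "y = x + 1" | "y = x + 2" | "x + 3 \<le> y"
    using \<open>x < y\<close> by linarith
  then show ?thesis
  proof cases
    case 1
    then show ?thesis
      using not_swapped by (auto simp: aswap_def)
  next
    case 2
    have "\<not> (x mod int n = int p \<and> (x + 1) mod int n = int p)"
      using mod_add_ne_self[of 1 "int n" x] n by auto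
    then have "aswap n p x \<le> x \<or> y \<le> aswap n p y"
      using 2 by (auto simp: aswap_def add.commute)
    then show ?thesis
      using bounds[of x] bounds[of y] 2 by linarith
  next
    case 3
    then show ?thesis
      using bounds[of x] bounds[of y] by linarith
  qed
qed

lemma ascending_inversion_persists:
  assumes n: "3 \<le> n"
  shows "ascending n (z @ w) \<Longrightarrow> a < b \<Longrightarrow> aperm n (rev z) b < aperm n (rev z) a \<Longrightarrow>
    aperm n (rev (z @ w)) b < aperm n (rev (z @ w)) a"
proof (induction w rule: rev_induct)
  case (snoc s w)
  define G where "G = aperm n (rev (z @ w))"
  have "ascending n (z @ w)" and asc: "ascent n (z @ w) s"
    using snoc.prems(1) ascending_snoc[of n "z @ w" s] by auto
  then have "G b < G a"
    using snoc by (simp add: G_def)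
  moreover have "\<not> (G a = G b + 1 \<and> G b mod int n = int s)"
  proof
    assume swapped: "G a = G b + 1 \<and> G b mod int n = int s"
    then have "aperm n (z @ w) (G b) < aperm n (z @ w) (G a)"
      using asc ascent_iff_mod[of "G b" n s "z @ w"] by simp
    then show False
      using snoc.prems(2) n by (simp add: G_def)
  qed
  ultimately show ?case
    using aswap_less_aswap[OF n] by (simp add: G_def)
qed simp

section \<open>Wiring diagrams\<close>

definition wrap :: "nat \<Rightarrow> int \<Rightarrow> nat" where
  "wrap n y = nat ((y - 1) mod int n) + 1"

lemma wrap_eq_iff:
  assumes "0 < n"
  shows "wrap n x = wrap n y \<longleftrightarrow> x mod int n = y mod int n"
proof -
  have "wrap n x = wrap n y \<longleftrightarrow> (x - 1) mod int n = (y - 1) mod int n"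
    using assms by (simp add: wrap_def eq_nat_nat_iff)
  also have "\<dots> \<longleftrightarrow> x mod int n = y mod int n"
    by (simp add: mod_eq_dvd_iff)
  finally show ?thesis .
qed

lemma int_wrap_mod: "0 < n \<Longrightarrow> int (wrap n y) mod int n = y mod int n"
  using mod_add_left_eq[of "y - 1" "int n" 1] by (simp add: wrap_def add.commute)

lemma lowpos_eq_wrap: "p < n \<Longrightarrow> lowpos n p = wrap n (int p)"
  by (cases "p = 0") (auto simp: lowpos_def wrap_def zmod_minus1)

lemma highpos_eq_wrap: "p < n \<Longrightarrow> highpos n p = wrap n (int p + 1)"
  by (simp add: highpos_def wrap_def)

lemma tr_wrap:
  assumes "p < n"
  shows "tr n p (wrap n y) = wrap n (aswap n p y)"
proof -
  have n: "0 < n"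
    using assms by simp
  have low: "wrap n z = lowpos n p \<longleftrightarrow> z mod int n = int p" for z
    using assms n by (simp add: lowpos_eq_wrap wrap_eq_iff)
  have high: "wrap n z = highpos n p \<longleftrightarrow> (z - 1) mod int n = int p" for z
  proof -
    have "wrap n z = highpos n p \<longleftrightarrow> z mod int n = (int p + 1) mod int n"
      using assms n by (simp add: highpos_eq_wrap wrap_eq_iff)
    also have "\<dots> \<longleftrightarrow> (z - 1) mod int n = int p mod int n"
      by (simp add: mod_eq_dvd_iff algebra_simps)
    finally show ?thesis
      using assms by simp
  qed
  consider "y mod int n = int p" | "y mod int n \<noteq> int p" "(y - 1) mod int n = int p"
    | "y mod int n \<noteq> int p" "(y - 1) mod int n \<noteq> int p"
    by blast
  then show ?thesis
  proof cases
    case 1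
    then show ?thesis
      using low[of y] high[of "y + 1"] by (simp add: tr_def aswap_def)
  next
    case 2
    then show ?thesis
      using low[of y] low[of "y - 1"] high[of y] by (simp add: tr_def aswap_def)
  next
    case 3
    then show ?thesis
      using low[of y] high[of y] by (simp add: tr_def aswap_def)
  qed
qed

lemma phi_word_wrap: "set w \<subseteq> {..<n} \<Longrightarrow> phi_word n w (wrap n y) = wrap n (aperm n w y)"
  by (induction w arbitrary: y) (auto simp: phi_word_def tr_wrap)

lemma wstate_wrap:
  assumes "set (v @ u) \<subseteq> {..<n}"
  shows "wstate n v u t (wrap n y) = wrap n (aperm n (rev v) (aperm n (take t (v @ u)) y))"
proof -
  have "set (take t (v @ u)) \<subseteq> {..<n}" "set (rev v) \<subseteq> {..<n}"
    using assms set_take_subset[of t "v @ u"] by auto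
  then show ?thesis
    by (simp only: wstate_def comp_apply phi_word_wrap)
qed

lemma wire_below_wrap:
  assumes "wire_below n v u i j" "set (v @ u) \<subseteq> {..<n}"
  obtains t where "t < length (v @ u)"
    "i = wrap n (aperm n (rev v) (aperm n (take t (v @ u)) (int ((v @ u) ! t))))"
    "j = wrap n (aperm n (rev v) (aperm n (take t (v @ u)) (int ((v @ u) ! t) + 1)))"
proof -
  obtain t where t: "t < length (v @ u)"
    and "wstate n v u t (lowpos n ((v @ u) ! t)) = i" "wstate n v u t (highpos n ((v @ u) ! t)) = j"
    using assms(1) unfolding wire_below_def by blast
  moreover have "(v @ u) ! t < n"
    using assms(2) nth_mem[OF t] by blast
  ultimately show ?thesis
    using that assms(2) by (simp add: lowpos_eq_wrap highpos_eq_wrap wstate_wrap)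
qed

lemma ascending_crossing_reverses:
  assumes n: "3 \<le> n" and "set w \<subseteq> {..<n}" and w: "ascending n w" and t: "t < length w"
  defines "a \<equiv> aperm n (take t w) (int (w ! t))" and "b \<equiv> aperm n (take t w) (int (w ! t) + 1)"
  shows "a < b" and "aperm n (rev w) b < aperm n (rev w) a"
proof -
  show "a < b"
    using w t by (simp add: ascending_def ascent_def a_def b_def)
  have z: "take (Suc t) w = take t w @ [w ! t]"
    using t by (simp add: take_Suc_conv_app_nth)
  have "w ! t < n"
    using assms(2) nth_mem[OF t] by blast
  have "aperm n (rev (take (Suc t) w)) b < aperm n (rev (take (Suc t) w)) a"
    using aswap_at[OF n, of "int (w ! t)" "w ! t"] \<open>w ! t < n\<close> n by (simp add: z a_def b_def)
  then show "aperm n (rev w) b < aperm n (rev w) a"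
    using ascending_inversion_persists[OF n, of "take (Suc t) w" "drop (Suc t) w" a b] w \<open>a < b\<close>
    by simp
qed

text \<open>Starting position minus final position of the strand that is at \<open>c\<close> at the cut.\<close>

definition displacement :: "nat \<Rightarrow> nat list \<Rightarrow> nat list \<Rightarrow> int \<Rightarrow> int" where
  "displacement n v u c = aperm n v c - aperm n (rev u) c"

lemma displacement_wrap: "0 < n \<Longrightarrow> displacement n v u (int (wrap n c)) = displacement n v u c"
  using aperm_periodic_diff[of "int (wrap n c)" n c v] aperm_periodic_diff[of "int (wrap n c)" n c "rev u"]
  by (simp add: displacement_def int_wrap_mod)

lemma displacement_aperm_rev:
  "2 \<le> n \<Longrightarrow> displacement n v u (aperm n (rev v) a) = a - aperm n (rev (v @ u)) a"
  by (simp add: displacement_def)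

theorem lemma4p3:
  fixes n :: nat and u v :: "nat list"
  assumes "3 \<le> n"
    and "reduced n u" and "is_glide n u"
    and "reduced n v" and "is_glide n v"
    and "reduced n (v @ u)"
  shows "\<exists>\<alpha> :: nat \<Rightarrow> real. \<forall>i j. wire_below n v u i j \<longrightarrow> \<alpha> i < \<alpha> j"
proof (intro exI[of _ "\<lambda>i. real_of_int (displacement n v u (int i))"] allI impI)
  note n = \<open>3 \<le> n\<close>
  have w: "set (v @ u) \<subseteq> {..<n}" "ascending n (v @ u)"
    using assms(6) reduced_imp_ascending[OF n] by (auto simp: reduced_def)
  fix i j assume "wire_below n v u i j"
  then obtain t where t: "t < length (v @ u)"
    and "i = wrap n (aperm n (rev v) (aperm n (take t (v @ u)) (int ((v @ u) ! t))))"
    and "j = wrap n (aperm n (rev v) (aperm n (take t (v @ u)) (int ((v @ u) ! t) + 1)))"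
    using wire_below_wrap w(1) by blast
  then show "real_of_int (displacement n v u (int i)) < real_of_int (displacement n v u (int j))"
    using ascending_crossing_reverses[OF n w t] n
    by (simp add: displacement_wrap displacement_aperm_rev)
qed

end
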